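(* Let $n,d\in\mathbb{Z}_+$, let $Q=(Q_{jk})_{j,k=0}^{n-1}$ be a real symmetric matrix, let $c\in\mathbb{R}$, and let $f:\mathbb{F}_2^n\to[-2^{d-1},2^{d-1})\cap\mathbb{Z}$ be given by $f(x)=c+\sum_{j,k=0}^{n-1}Q_{jk}x_jx_k$ (so $c=f(0)$). Set $q_j=\sum_{k}Q_{jk}$ and $q_\emptyset=f(0)+\tfrac14\mathrm{tr}(Q)+\tfrac14\mathrm{sum}(Q)$, where $\mathrm{sum}(Q)=\sum_{j,k}Q_{jk}$. Define the following unitaries on $n+d$ qubits (an $n$-qubit register holding $x=(x_0,\dots,x_{n-1})$ and a $d$-qubit register holding $y$): - $\tilde U_\emptyset=\mathbb{1}\otimes\mathcal{P}_d(q_\emptyset)$; - for $0\le j\le n-1$, $\tilde U_j$ = (controlled on qubit $x_j$, apply $X^{\otimes d}$ to the $y$-register), then $\mathcal{P}_d(-\tfrac{q_j}{2})$ on the $y$-register, then again (controlled on $x_j$, apply $X^{\otimes d}$ to the $y$-register); - for $0\le j<k\le n-1$, $\tilde U_{jk}$ = CNOT with control $x_j$ and target $x_k$, then (controlled on qubit $x_k$, apply $X^{\otimes d}$ to the $y$-register), then $\mathcal{P}_d(\tfrac{Q_{jk}}{2})$ on the $y$-register, then (controlled on $x_k$, apply $X^{\otimes d}$ to the $y$-register), then CNOT with control $x_j$ and target $x_k$. Let $\tilde U_{f,d}=\tilde U_\emptyset\circ\prod_{j=0}^{n-1}\tilde U_j\circ\prod_{j=0}^{n-2}\prod_{k=j+1}^{n-1}\tilde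 U_{jk}$. Then for every $x\in\mathbb{F}_2^n$ and every $y\in\mathbb{F}_2^d$ (identified with an integer mod $2^d$), $$\tilde U_{f,d}\ket{x}\ket{y}_d=\exp\!\Big(\tfrac{2\pi i}{2^d}f(x)\,y+i\alpha_{f,x}\Big)\ket{x}\ket{y}_d,\qquad \alpha_{f,x}=\tfrac{\pi(1-2^d)}{2^d}\big(f(x)-f(0)\big).$$ Consequently $U_{f,d}=(\mathbb{1}\otimes\mathrm{QFT}_d^\dagger)\circ\tilde U_{f,d}\circ(\mathbb{1}\otimes\mathrm{QFT}_d)$ satisfies $U_{f,d}\ket{x}\ket{y}_d=e^{i\alpha_{f,x}}\ket{x}\ket{y+f(x)}_d$ for all $x,y$, i.e. it is a projective quantum dictionary encoder for $f$ with garbage phases $\alpha_{f,x}$.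
   Context: Computational basis notation: for $x=(x_0,\dots,x_{n-1})\in\mathbb{F}_2^n$, $\ket{x}=\ket{x_0}\cdots\ket{x_{n-1}}$. For $\bar y\in\mathbb{Z}$ and $d\in\mathbb{Z}_+$, $\ket{\bar y}_d=\ket{y_0}\cdots\ket{y_{d-1}}$ where $(y_0,\dots,y_{d-1})\in\mathbb{F}_2^d$ satisfies $\bar y\equiv\sum_{j=0}^{d-1}y_j2^{d-1-j}\pmod{2^d}$; arithmetic inside $\ket{\cdot}_d$ is mod $2^d$. Note $X^{\otimes d}\ket{y}_d=\ket{-y-1}_d$. For $k\in\mathbb{R}$, $\mathcal{P}_d(k)=\bigotimes_{j=0}^{d-1}\mathrm{diag}(1,e^{\pi i k/2^j})$, equivalently $\mathcal{P}_d(k)\ket{y}_d=e^{2\pi i ky/2^d}\ket{y}_d$. $\mathrm{QFT}_d$ is the $d$-qubit quantum Fourier transform, $\mathrm{QFT}_d\ket{y}_d=2^{-d/2}\sum_{z=0}^{2^d-1}e^{2\pi i yz/2^d}\ket{z}_d$. A unitary $U_{f,d}$ on $n+d$ qubits is a projective quantum dictionary encoder for $f:\mathbb{F}_2^n\to\mathbb{Z}$ if $U_{f,d}\ket{x}\ket{y}_d=e^{i\alpha}\ket{x}\ket{y+f(x)}_d$ for all $x,y$, for some real phases $\alpha$ (the garbage phases). *)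

theory Defs
  imports Complex_Main
begin

text \<open>Model: an (n+d)-qubit computational basis state is a bool list of length n+d;
  the first n entries are the x-register (x_0,...,x_{n-1}), the last d entries the
  y-register (y_0,...,y_{d-1}), with y_0 the most significant bit.
  A state is a function from bool lists to complex amplitudes (supported on lists of
  length n+d). An operator is given by its matrix M out in, acting linearly.\<close>

type_synonym state = "bool list \<Rightarrow> complex"
type_synonym mat = "bool list \<Rightarrow> bool list \<Rightarrow> complex"

definition lin_op :: "nat \<Rightarrow> mat \<Rightarrow> state \<Rightarrow> state" where
  "lin_op N M \<psi> = (\<lambda>b. \<Sum>b'\<in>{bs. length bs = N}. M b b' * \<psi> b')"

definition adj :: "mat \<Rightarrow> mat" where
  "adj M = (\<lambda>b b'. cnj (M b' b))"

definition ket :: "bool list \<Rightarrow> state" where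
  "ket b = (\<lambda>b'. if b' = b then 1 else 0)"

definition bval :: "bool list \<Rightarrow> nat" where
  "bval ys = (\<Sum>j<length ys. if ys ! j then 2 ^ (length ys - 1 - j) else 0)"

definition bits_d :: "nat \<Rightarrow> int \<Rightarrow> bool list" where
  "bits_d d ybar = map (\<lambda>j. odd ((ybar mod 2 ^ d) div 2 ^ (d - 1 - j))) [0..<d]"

definition ket_xy :: "nat \<Rightarrow> bool list \<Rightarrow> int \<Rightarrow> state" where
  "ket_xy d x ybar = ket (x @ bits_d d ybar)"

definition perm_mat :: "(bool list \<Rightarrow> bool list) \<Rightarrow> mat" where
  "perm_mat g = (\<lambda>b b'. if b = g b' then 1 else 0)"

definition diag_mat :: "(bool list \<Rightarrow> complex) \<Rightarrow> mat" where
  "diag_mat \<phi> = (\<lambda>b b'. if b = b' then \<phi> b else 0)"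

definition CNOT :: "nat \<Rightarrow> nat \<Rightarrow> nat \<Rightarrow> state \<Rightarrow> state" where
  "CNOT N j k = lin_op N (perm_mat (\<lambda>b. b[k := (b ! k \<noteq> b ! j)]))"

definition CXd :: "nat \<Rightarrow> nat \<Rightarrow> nat \<Rightarrow> state \<Rightarrow> state" where
  "CXd n d j = lin_op (n + d)
     (perm_mat (\<lambda>b. if b ! j then take n b @ map Not (drop n b) else b))"

definition Pd :: "nat \<Rightarrow> nat \<Rightarrow> real \<Rightarrow> state \<Rightarrow> state" where
  "Pd n d k = lin_op (n + d)
     (diag_mat (\<lambda>b. \<Prod>j<d. if drop n b ! j then cis (pi * k / 2 ^ j) else 1))"

definition QFT_mat :: "nat \<Rightarrow> nat \<Rightarrow> mat" where
  "QFT_mat n d = (\<lambda>b b'. if length b = n + d \<and> length b' = n + d \<and> take n b = take n b'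
      then complex_of_real (2 powr (- real d / 2))
           * cis (2 * pi * real (bval (drop n b')) * real (bval (drop n b)) / 2 ^ d)
      else 0)"

definition QFT :: "nat \<Rightarrow> nat \<Rightarrow> state \<Rightarrow> state" where
  "QFT n d = lin_op (n + d) (QFT_mat n d)"

definition QFT_dag :: "nat \<Rightarrow> nat \<Rightarrow> state \<Rightarrow> state" where
  "QFT_dag n d = lin_op (n + d) (adj (QFT_mat n d))"

definition comp_list :: "('a \<Rightarrow> 'a) list \<Rightarrow> 'a \<Rightarrow> 'a" where
  "comp_list As = foldr (\<circ>) As id"

definition U_empty :: "nat \<Rightarrow> nat \<Rightarrow> real \<Rightarrow> state \<Rightarrow> state" where
  "U_empty n d q0 = Pd n d q0"

definition U_j :: "nat \<Rightarrow> nat \<Rightarrow> real \<Rightarrow> nat \<Rightarrow> state \<Rightarrow> state" where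
  "U_j n d qj j = CXd n d j \<circ> Pd n d (- qj / 2) \<circ> CXd n d j"

definition U_jk :: "nat \<Rightarrow> nat \<Rightarrow> real \<Rightarrow> nat \<Rightarrow> nat \<Rightarrow> state \<Rightarrow> state" where
  "U_jk n d Qjk j k = CNOT (n + d) j k \<circ> CXd n d k \<circ> Pd n d (Qjk / 2) \<circ> CXd n d k \<circ> CNOT (n + d) j k"

definition Utilde :: "nat \<Rightarrow> nat \<Rightarrow> (nat \<Rightarrow> nat \<Rightarrow> real) \<Rightarrow> real \<Rightarrow> state \<Rightarrow> state" where
  "Utilde n d Q f0 =
     (let qe = f0 + (\<Sum>j<n. Q j j) / 4 + (\<Sum>j<n. \<Sum>k<n. Q j k) / 4;
          q = (\<lambda>j. \<Sum>k<n. Q j k)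
      in U_empty n d qe
         \<circ> comp_list (map (\<lambda>j. U_j n d (q j) j) [0..<n])
         \<circ> comp_list [U_jk n d (Q j k) j k. j \<leftarrow> [0..<n - 1], k \<leftarrow> [j + 1..<n]])"

definition U_f :: "nat \<Rightarrow> nat \<Rightarrow> (nat \<Rightarrow> nat \<Rightarrow> real) \<Rightarrow> real \<Rightarrow> state \<Rightarrow> state" where
  "U_f n d Q f0 = QFT_dag n d \<circ> Utilde n d Q f0 \<circ> QFT n d"

definition proj_encoder :: "nat \<Rightarrow> nat \<Rightarrow> (bool list \<Rightarrow> int) \<Rightarrow> (state \<Rightarrow> state) \<Rightarrow> bool" where
  "proj_encoder n d f U \<longleftrightarrow> (\<forall>x y. length x = n \<longrightarrow>
      (\<exists>\<alpha>::real. U (ket_xy d x y) = (\<lambda>b. cis \<alpha> * ket_xy d x (y + f x) b)))"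

end

(*
  Every gate of the circuit is diagonal in the computational basis. The phase gate P_d(k)
  multiplies |y>_d by exp(2 pi i k y / 2^d); conjugating it by a controlled X^{(x)d} replaces
  y by 2^d - 1 - y whenever the control qubit is set, and conjugating once more by CNOT(j,k)
  turns the control into x_j xor x_k. Hence the circuit multiplies |x>|y>_d by
  exp(2 pi i theta(x, y) / 2^d) with theta affine in y. Writing the complemented value as
  y + s (2^d - 1 - 2 y) and x_j xor x_k as x_j + x_k - 2 x_j x_k, the symmetry of Q and
  x_j^2 = x_j make theta collapse to f(x) y - (2^d - 1) (f(x) - f(0)) / 2.
  Conjugating a diagonal phase exp(2 pi i F y / 2^d) by the quantum Fourier transform shifts
  y by F, by orthogonality of the characters z |-> exp(2 pi i m z / 2^d).
*)

theory Submission
  imports Defs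
begin

section \<open>Bit strings\<close>

lemma bval_Nil [simp]: "bval [] = 0"
  by (simp add: bval_def)

lemma bval_Cons [simp]: "bval (b # w) = of_bool b * 2 ^ length w + bval w"
  unfolding bval_def by (auto simp: sum.lessThan_Suc_shift simp del: sum.lessThan_Suc intro!: sum.cong)

lemma bval_eq_horner_sum: "bval w = horner_sum of_bool 2 (rev w)"
  by (induction w) (simp_all add: horner_sum_append)

lemma bval_less: "bval w < 2 ^ length w"
  unfolding bval_eq_horner_sum using horner_sum_bound[of "rev w"] by simp

lemma bval_map_Not: "real (bval (map Not w)) = 2 ^ length w - 1 - real (bval w)"
proof -
  have "real (bval w) + real (bval (map Not w)) + 1 = 2 ^ length w"
    by (induction w) (auto simp: algebra_simps)
  then show ?thesis by simp
qed

lemma bits_d_eq_rev_map_bit: "bits_d d z = rev (map (bit z) [0..<d])"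
  by (rule nth_equalityI)
     (auto simp: bits_d_def rev_nth bit_iff_odd[symmetric] take_bit_eq_mod[symmetric] bit_take_bit_iff)

lemma length_bits_d [simp]: "length (bits_d d z) = d"
  by (simp add: bits_d_def)

lemma bval_bits_d: "int (bval (bits_d d z)) = z mod 2 ^ d"
proof -
  have "int (bval (bits_d d z)) = int (horner_sum of_bool 2 (map (bit z) [0..<d]))"
    by (simp add: bval_eq_horner_sum bits_d_eq_rev_map_bit)
  also have "\<dots> = horner_sum of_bool 2 (map (bit z) [0..<d])"
    by (metis nat_horner_sum horner_sum_nonnegative int_nat_eq)
  finally show ?thesis by (simp add: horner_sum_bit_eq_take_bit take_bit_eq_mod)
qed

lemma bits_d_bval: "bits_d (length w) (int (bval w)) = w"
  by (rule nth_equalityI)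
     (auto simp: bits_d_eq_rev_map_bit bval_eq_horner_sum bit_of_nat_iff bit_horner_sum_bit_iff rev_nth)

lemma bij_betw_bval: "bij_betw bval {w. length w = d} {..<2 ^ d}"
proof (rule bij_betw_imageI)
  show "inj_on bval {w. length w = d}"
    by (rule inj_onI) (metis bits_d_bval mem_Collect_eq)
  show "bval ` {w. length w = d} = {..<2 ^ d}"
  proof
    show "bval ` {w. length w = d} \<subseteq> {..<2 ^ d}" using bval_less by auto
    show "{..<2 ^ d} \<subseteq> bval ` {w. length w = d}"
    proof
      fix z :: nat assume "z \<in> {..<2 ^ d}"
      then have "int (bval (bits_d d (int z))) = int z"
        by (simp add: bval_bits_d of_nat_less_iff[symmetric])
      then show "z \<in> bval ` {w. length w = d}"
        by (metis (mono_tags) image_eqI length_bits_d mem_Collect_eq of_nat_eq_iff)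
    qed
  qed
qed

section \<open>Diagonal and permutation operators\<close>

lemma finite_lists_length: "finite {bs :: bool list. length bs = N}"
  using finite_lists_length_eq[of "UNIV :: bool set" N] by simp

lemma lin_op_ket: "length b0 = N \<Longrightarrow> lin_op N M (ket b0) = (\<lambda>b. M b b0)"
  unfolding lin_op_def ket_def
  by (rule ext) (simp add: finite_lists_length if_distrib sum.delta' cong: if_cong)

lemma lin_op_scale: "lin_op N M (\<lambda>b. a * \<psi> b) = (\<lambda>b. a * lin_op N M \<psi> b)"
  by (simp add: lin_op_def sum_distrib_left mult.left_commute)

lemma lin_op_diag_mat:
  "lin_op N (diag_mat \<phi>) \<psi> = (\<lambda>b. if length b = N then \<phi> b * \<psi> b else 0)"
proof
  fix b :: "bool list"
  have "lin_op N (diag_mat \<phi>) \<psi> b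
      = (\<Sum>b'\<in>{bs. length bs = N}. if b' = b then \<phi> b * \<psi> b' else 0)"
    unfolding lin_op_def diag_mat_def by (rule sum.cong) auto
  then show "lin_op N (diag_mat \<phi>) \<psi> b = (if length b = N then \<phi> b * \<psi> b else 0)"
    by (simp add: finite_lists_length sum.delta')
qed

lemma lin_op_diag_mat_ket:
  "length b0 = N \<Longrightarrow> lin_op N (diag_mat \<phi>) (ket b0) = (\<lambda>b. \<phi> b0 * ket b0 b)"
  by (auto simp: lin_op_diag_mat ket_def)

lemma lin_op_diag_mat_cong:
  "(\<And>b. length b = N \<Longrightarrow> \<phi> b = \<chi> b) \<Longrightarrow> lin_op N (diag_mat \<phi>) = lin_op N (diag_mat \<chi>)"
  by (simp add: lin_op_diag_mat fun_eq_iff)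

lemma lin_op_diag_mat_comp:
  "lin_op N (diag_mat \<phi>) \<circ> lin_op N (diag_mat \<chi>) = lin_op N (diag_mat (\<lambda>b. \<phi> b * \<chi> b))"
  by (simp add: lin_op_diag_mat fun_eq_iff)

lemma lin_op_perm_mat:
  assumes "\<And>b. length b = N \<Longrightarrow> length (g b) = N \<and> g (g b) = b"
  shows "lin_op N (perm_mat g) \<psi> = (\<lambda>b. if length b = N then \<psi> (g b) else 0)"
proof
  fix b :: "bool list"
  have "lin_op N (perm_mat g) \<psi> b
      = (\<Sum>b'\<in>{bs. length bs = N}. if b' = g b \<and> length b = N then \<psi> b' else 0)"
    unfolding lin_op_def perm_mat_def by (rule sum.cong) (use assms in auto)
  then show "lin_op N (perm_mat g) \<psi> b = (if length b = N then \<psi> (g b) else 0)"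
    using assms by (simp add: finite_lists_length sum.delta')
qed

lemma lin_op_perm_mat_conj_diag_mat:
  assumes "\<And>b. length b = N \<Longrightarrow> length (g b) = N \<and> g (g b) = b"
  shows "lin_op N (perm_mat g) \<circ> lin_op N (diag_mat \<phi>) \<circ> lin_op N (perm_mat g)
    = lin_op N (diag_mat (\<lambda>b. \<phi> (g b)))"
  using assms by (simp add: lin_op_perm_mat[OF assms] lin_op_diag_mat fun_eq_iff)

lemma comp_list_diag_mat:
  assumes "\<And>i. i \<in> set L \<Longrightarrow> G i = lin_op N (diag_mat (\<lambda>b. cis (\<theta> i b)))"
  shows "lin_op N (diag_mat (\<lambda>b. cis (\<theta>0 b))) \<circ> comp_list (map G L)
    = lin_op N (diag_mat (\<lambda>b. cis (\<theta>0 b + (\<Sum>i\<leftarrow>L. \<theta> i b))))"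
  using assms
proof (induction L arbitrary: \<theta>0)
  case Nil
  then show ?case by (simp add: comp_list_def)
next
  case (Cons a L)
  have "lin_op N (diag_mat (\<lambda>b. cis (\<theta>0 b))) \<circ> comp_list (map G (a # L))
      = (lin_op N (diag_mat (\<lambda>b. cis (\<theta>0 b))) \<circ> G a) \<circ> comp_list (map G L)"
    by (simp add: comp_list_def o_assoc)
  also have "\<dots> = lin_op N (diag_mat (\<lambda>b. cis (\<theta>0 b + \<theta> a b))) \<circ> comp_list (map G L)"
    by (simp add: Cons.prems lin_op_diag_mat_comp cis_mult)
  also have "\<dots> = lin_op N (diag_mat (\<lambda>b. cis (\<theta>0 b + (\<Sum>i\<leftarrow>a # L. \<theta> i b))))"
    using Cons.IH[of "\<lambda>b. \<theta>0 b + \<theta> a b"] Cons.prems by (simp add: add.assoc comp_def)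
  finally show ?case .
qed

section \<open>The gates are diagonal\<close>

text \<open>Since \<open>X\<^sup>\<otimes>\<^sup>d |y>\<^sub>d = |2\<^sup>d - 1 - y>\<^sub>d\<close>, this is the value of the y-register
  after \<open>X\<^sup>\<otimes>\<^sup>d\<close> controlled by \<open>s\<close>, for \<open>M = 2\<^sup>d\<close>.\<close>

definition cond_complement :: "real \<Rightarrow> bool \<Rightarrow> real \<Rightarrow> real" where
  "cond_complement M s y = (if s then M - 1 - y else y)"

lemma prod_phase_bits:
  "(\<Prod>j<length w. if w ! j then cis (pi * k / 2 ^ j) else 1)
    = cis (2 * pi * k * bval w / 2 ^ length w)"
proof (induction w arbitrary: k)
  case Nil
  then show ?case by simp
next
  case (Cons b w)
  have "(\<Prod>j<length (b # w). if (b # w) ! j then cis (pi * k / 2 ^ j) else 1)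
      = (if b then cis (pi * k) else 1)
        * (\<Prod>j<length w. if w ! j then cis (pi * (k / 2) / 2 ^ j) else 1)"
    by (simp add: prod.lessThan_Suc_shift del: prod.lessThan_Suc cong: if_cong)
  also have "\<dots> = (if b then cis (pi * k) else 1) * cis (pi * k * bval w / 2 ^ length w)"
    using Cons.IH[of "k / 2"] by simp
  also have "\<dots> = cis (pi * k * of_bool b + pi * k * bval w / 2 ^ length w)"
    by (simp add: cis_mult)
  also have "pi * k * of_bool b + pi * k * bval w / 2 ^ length w
      = 2 * pi * k * bval (b # w) / 2 ^ length (b # w)"
    by (simp add: field_simps)
  finally show ?case .
qed

lemma Pd_eq_diag:
  "Pd n d k = lin_op (n + d) (diag_mat (\<lambda>b. cis (2 * pi / 2 ^ d * (k * bval (drop n b)))))"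
  unfolding Pd_def
proof (rule lin_op_diag_mat_cong)
  fix b :: "bool list"
  assume "length b = n + d"
  then have "length (drop n b) = d" by simp
  then show "(\<Prod>j<d. if drop n b ! j then cis (pi * k / 2 ^ j) else 1)
    = cis (2 * pi / 2 ^ d * (k * bval (drop n b)))"
    using prod_phase_bits[of "drop n b" k] by (simp add: mult_ac)
qed

lemma CXd_conj_diag_mat:
  assumes "j < n"
  shows "CXd n d j \<circ> lin_op (n + d) (diag_mat \<phi>) \<circ> CXd n d j
    = lin_op (n + d) (diag_mat (\<lambda>b. \<phi> (if b ! j then take n b @ map Not (drop n b) else b)))"
  unfolding CXd_def
  by (rule lin_op_perm_mat_conj_diag_mat) (use assms in \<open>auto simp: nth_append comp_def\<close>)

lemma CNOT_conj_diag_mat: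
  assumes "j < N" "k < N" "j \<noteq> k"
  shows "CNOT N j k \<circ> lin_op N (diag_mat \<phi>) \<circ> CNOT N j k
    = lin_op N (diag_mat (\<lambda>b. \<phi> (b[k := (b ! k \<noteq> b ! j)])))"
  unfolding CNOT_def
  by (rule lin_op_perm_mat_conj_diag_mat) (use assms in \<open>auto simp: list_update_same_conv\<close>)

lemma U_j_eq_diag:
  assumes "j < n"
  shows "U_j n d q j = lin_op (n + d) (diag_mat
    (\<lambda>b. cis (2 * pi / 2 ^ d * (- q / 2 * cond_complement (2 ^ d) (b ! j) (bval (drop n b))))))"
  unfolding U_j_def Pd_eq_diag CXd_conj_diag_mat[OF assms]
  by (rule lin_op_diag_mat_cong) (use assms in \<open>simp add: cond_complement_def bval_map_Not\<close>)

lemma U_jk_eq_diag: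
  assumes "j < k" "k < n"
  shows "U_jk n d q j k = lin_op (n + d) (diag_mat
    (\<lambda>b. cis (2 * pi / 2 ^ d * (q / 2 * cond_complement (2 ^ d) (b ! j \<noteq> b ! k) (bval (drop n b))))))"
proof -
  have "j < n + d" "k < n + d" "j \<noteq> k" using assms by auto
  have "U_jk n d q j k = CNOT (n + d) j k \<circ> U_j n d (- q) k \<circ> CNOT (n + d) j k"
    by (simp add: U_jk_def U_j_def o_assoc)
  also have "\<dots> = lin_op (n + d) (diag_mat (\<lambda>b. cis (2 * pi / 2 ^ d * (- (- q) / 2
      * cond_complement (2 ^ d) (b[k := (b ! k \<noteq> b ! j)] ! k)
          (bval (drop n (b[k := (b ! k \<noteq> b ! j)])))))))"
    unfolding U_j_eq_diag[OF assms(2)] by (rule CNOT_conj_diag_mat) fact+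
  also have "\<dots> = lin_op (n + d) (diag_mat
    (\<lambda>b. cis (2 * pi / 2 ^ d * (q / 2 * cond_complement (2 ^ d) (b ! j \<noteq> b ! k) (bval (drop n b))))))"
    by (rule lin_op_diag_mat_cong) (use assms in \<open>auto simp: cond_complement_def\<close>)
  finally show ?thesis .
qed

lemma sum_list_upper_pairs:
  "(\<Sum>p\<leftarrow>[(j, k). j \<leftarrow> [0..<n - 1], k \<leftarrow> [j + 1..<n]]. case_prod h p)
    = (\<Sum>j<n. \<Sum>k\<in>{Suc j..<n}. h j k :: 'a :: comm_monoid_add)"
proof -
  have sum_list_concat: "sum_list (map g (concat xss)) = (\<Sum>xs\<leftarrow>xss. sum_list (map g xs))"
    for g :: "nat \<times> nat \<Rightarrow> 'a" and xss
    by (induction xss) simp_all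
  have "(\<Sum>p\<leftarrow>[(j, k). j \<leftarrow> [0..<n - 1], k \<leftarrow> [j + 1..<n]]. case_prod h p)
      = (\<Sum>j<n - 1. \<Sum>k\<in>{Suc j..<n}. h j k)"
    by (simp add: sum_list_concat o_def sum_set_upt_conv_sum_list_nat[symmetric] atLeast0LessThan)
  also have "\<dots> = (\<Sum>j<n. \<Sum>k\<in>{Suc j..<n}. h j k)"
    by (cases n) simp_all
  finally show ?thesis .
qed

lemma Utilde_eq_diag:
  "Utilde n d Q c = lin_op (n + d) (diag_mat (\<lambda>b. cis (2 * pi / 2 ^ d * (
        (c + (\<Sum>j<n. Q j j) / 4 + (\<Sum>j<n. \<Sum>k<n. Q j k) / 4) * bval (drop n b)
      + (\<Sum>j<n. - (\<Sum>k<n. Q j k) / 2 * cond_complement (2 ^ d) (b ! j) (bval (drop n b)))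
      + (\<Sum>j<n. \<Sum>k\<in>{Suc j..<n}.
          Q j k / 2 * cond_complement (2 ^ d) (b ! j \<noteq> b ! k) (bval (drop n b)))))))"
  (is "_ = lin_op _ (diag_mat (\<lambda>b. cis (2 * pi / 2 ^ d * ?angle b)))")
proof -
  define \<kappa> where "\<kappa> = 2 * pi / 2 ^ d"
  define Y where "Y b = real (bval (drop n b))" for b
  define pairs where "pairs = [(j, k). j \<leftarrow> [0..<n - 1], k \<leftarrow> [j + 1..<n]]"
  define \<theta>0 where "\<theta>0 b = \<kappa> * ((c + (\<Sum>j<n. Q j j) / 4 + (\<Sum>j<n. \<Sum>k<n. Q j k) / 4) * Y b)"
    for b
  define \<theta>1 where "\<theta>1 j b = \<kappa> * (- (\<Sum>k<n. Q j k) / 2 * cond_complement (2 ^ d) (b ! j) (Y b))"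
    for j b
  define \<theta>2 where "\<theta>2 p b = \<kappa> * (Q (fst p) (snd p) / 2
      * cond_complement (2 ^ d) (b ! fst p \<noteq> b ! snd p) (Y b))" for p b
  define G1 where "G1 = (\<lambda>j. U_j n d (\<Sum>k<n. Q j k) j)"
  define G2 where "G2 = (\<lambda>p. U_jk n d (Q (fst p) (snd p)) (fst p) (snd p))"
  have "Utilde n d Q c
      = lin_op (n + d) (diag_mat (\<lambda>b. cis (\<theta>0 b))) \<circ> comp_list (map G1 [0..<n])
        \<circ> comp_list (map G2 pairs)"
    by (simp add: Utilde_def U_empty_def Pd_eq_diag \<theta>0_def \<kappa>_def Y_def G1_def G2_def pairs_def
        map_concat o_def)
  also have "lin_op (n + d) (diag_mat (\<lambda>b. cis (\<theta>0 b))) \<circ> comp_list (map G1 [0..<n])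
      = lin_op (n + d) (diag_mat (\<lambda>b. cis (\<theta>0 b + (\<Sum>j\<leftarrow>[0..<n]. \<theta>1 j b))))"
    by (rule comp_list_diag_mat) (simp add: G1_def U_j_eq_diag \<theta>1_def \<kappa>_def Y_def)
  also have "\<dots> \<circ> comp_list (map G2 pairs) = lin_op (n + d) (diag_mat
      (\<lambda>b. cis (\<theta>0 b + (\<Sum>j\<leftarrow>[0..<n]. \<theta>1 j b) + (\<Sum>p\<leftarrow>pairs. \<theta>2 p b))))"
    by (rule comp_list_diag_mat) (auto simp: G2_def U_jk_eq_diag \<theta>2_def \<kappa>_def Y_def pairs_def)
  also have "\<dots> = lin_op (n + d) (diag_mat (\<lambda>b. cis (\<kappa> * ?angle b)))"
  proof (intro arg_cong[where f = "\<lambda>\<phi>. lin_op (n + d) (diag_mat \<phi>)"] ext arg_cong[where f = cis])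
    fix b :: "bool list"
    have "(\<Sum>j\<leftarrow>[0..<n]. \<theta>1 j b)
        = \<kappa> * (\<Sum>j<n. - (\<Sum>k<n. Q j k) / 2 * cond_complement (2 ^ d) (b ! j) (Y b))"
      by (simp only: \<theta>1_def sum_list_const_mult sum_set_upt_conv_sum_list_nat[symmetric]
          atLeast0LessThan set_upt)
    moreover have "(\<Sum>p\<leftarrow>pairs. \<theta>2 p b) = \<kappa> * (\<Sum>j<n. \<Sum>k\<in>{Suc j..<n}.
        Q j k / 2 * cond_complement (2 ^ d) (b ! j \<noteq> b ! k) (Y b))"
      using sum_list_upper_pairs[where n = n and h = "\<lambda>j k. \<theta>2 (j, k) b"]
      by (simp add: \<theta>2_def pairs_def split_def sum_distrib_left)
    ultimately show "\<theta>0 b + (\<Sum>j\<leftarrow>[0..<n]. \<theta>1 j b) + (\<Sum>p\<leftarrow>pairs. \<theta>2 p b) = \<kappa> * ?angle b"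
      by (simp add: \<theta>0_def Y_def distrib_left)
  qed
  finally show ?thesis
    unfolding \<kappa>_def .
qed

section \<open>Collecting the phases\<close>

lemma sum_upper_triangle_symmetric:
  fixes h :: "nat \<Rightarrow> nat \<Rightarrow> 'a :: comm_ring_1"
  assumes "\<And>j k. j < n \<Longrightarrow> k < n \<Longrightarrow> h j k = h k j"
  shows "2 * (\<Sum>j<n. \<Sum>k\<in>{Suc j..<n}. h j k) = (\<Sum>j<n. \<Sum>k<n. h j k) - (\<Sum>j<n. h j j)"
  using assms
proof (induction n)
  case 0
  then show ?case by simp
next
  case (Suc n)
  have IH: "2 * (\<Sum>j<n. \<Sum>k\<in>{Suc j..<n}. h j k) = (\<Sum>j<n. \<Sum>k<n. h j k) - (\<Sum>j<n. h j j)"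
    using Suc.prems by (intro Suc.IH) auto
  have row: "(\<Sum>k<n. h n k) = (\<Sum>j<n. h j n)"
    using Suc.prems by (intro sum.cong) auto
  have upper: "(\<Sum>j<Suc n. \<Sum>k\<in>{Suc j..<Suc n}. h j k)
      = (\<Sum>j<n. \<Sum>k\<in>{Suc j..<n}. h j k) + (\<Sum>j<n. h j n)"
    by (simp add: sum.distrib)
  have full: "(\<Sum>j<Suc n. \<Sum>k<Suc n. h j k)
      = (\<Sum>j<n. \<Sum>k<n. h j k) + (\<Sum>j<n. h j n) + ((\<Sum>k<n. h n k) + h n n)"
    by (simp add: sum.distrib)
  show ?case
    unfolding upper full row using IH by (simp add: algebra_simps)
qed

definition quad_form :: "nat \<Rightarrow> (nat \<Rightarrow> nat \<Rightarrow> real) \<Rightarrow> bool list \<Rightarrow> real" where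
  "quad_form n Q x = (\<Sum>j<n. \<Sum>k<n. Q j k * (if x ! j then 1 else 0) * (if x ! k then 1 else 0))"

lemma sum_upper_triangle_xor:
  assumes sym: "\<And>j k. j < n \<Longrightarrow> k < n \<Longrightarrow> Q j k = Q k j"
  shows "(\<Sum>j<n. \<Sum>k\<in>{Suc j..<n}. Q j k * (if x ! j \<noteq> x ! k then 1 else 0))
    = (\<Sum>j<n. (\<Sum>k<n. Q j k) * (if x ! j then 1 else 0)) - quad_form n Q x"
proof -
  define X where "X j = (if x ! j then 1 else 0 :: real)" for j
  define P where "P = (\<Sum>j<n. (\<Sum>k<n. Q j k) * X j)"
  have xor: "(if x ! j \<noteq> x ! k then 1 else 0) = X j + X k - 2 * (X j * X k)" for j k
    by (simp add: X_def)
  have row_sum: "(\<Sum>j<n. \<Sum>k<n. Q j k * X j) = P"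
    by (simp add: P_def sum_distrib_right)
  have column_sum: "(\<Sum>j<n. \<Sum>k<n. Q j k * X k) = P"
    unfolding row_sum[symmetric] by (subst sum.swap) (auto intro!: sum.cong simp: sym)
  have "2 * (\<Sum>j<n. \<Sum>k\<in>{Suc j..<n}. Q j k * (if x ! j \<noteq> x ! k then 1 else 0))
      = (\<Sum>j<n. \<Sum>k<n. Q j k * (if x ! j \<noteq> x ! k then 1 else 0))
        - (\<Sum>j<n. Q j j * (if x ! j \<noteq> x ! j then 1 else 0))"
    by (rule sum_upper_triangle_symmetric) (use sym in fastforce)
  also have "\<dots> = (\<Sum>j<n. \<Sum>k<n. Q j k * (if x ! j \<noteq> x ! k then 1 else 0))"
    by simp
  also have "\<dots> = (\<Sum>j<n. \<Sum>k<n. Q j k * X j + Q j k * X k - 2 * (Q j k * X j * X k))"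
    unfolding xor by (simp add: algebra_simps)
  also have "\<dots> = 2 * P - 2 * quad_form n Q x"
    unfolding sum_subtractf sum.distrib sum_distrib_left[symmetric] row_sum column_sum
    by (simp add: quad_form_def X_def)
  finally show ?thesis
    unfolding P_def X_def by simp
qed

lemma quadratic_phase_angle:
  assumes sym: "\<And>j k. j < n \<Longrightarrow> k < n \<Longrightarrow> Q j k = Q k j"
  shows "(c + (\<Sum>j<n. Q j j) / 4 + (\<Sum>j<n. \<Sum>k<n. Q j k) / 4) * y
      + (\<Sum>j<n. - (\<Sum>k<n. Q j k) / 2 * cond_complement M (x ! j) y)
      + (\<Sum>j<n. \<Sum>k\<in>{Suc j..<n}. Q j k / 2 * cond_complement M (x ! j \<noteq> x ! k) y)
    = (c + quad_form n Q x) * y - (M - 1) / 2 * quad_form n Q x"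
proof -
  define D where "D = M - 1 - 2 * y"
  define B where "B s = (if s then 1 else 0 :: real)" for s
  define S where "S = (\<Sum>j<n. \<Sum>k<n. Q j k)"
  define P where "P = (\<Sum>j<n. (\<Sum>k<n. Q j k) * B (x ! j))"
  define U where "U = (\<Sum>j<n. \<Sum>k\<in>{Suc j..<n}. Q j k)"
  define V where "V = (\<Sum>j<n. \<Sum>k\<in>{Suc j..<n}. Q j k * B (x ! j \<noteq> x ! k))"
  have cc: "cond_complement M s y = y + B s * D" for s
    by (simp add: cond_complement_def D_def B_def)
  have singles: "(\<Sum>j<n. - (\<Sum>k<n. Q j k) / 2 * cond_complement M (x ! j) y) = - y / 2 * S - D / 2 * P"
  proof -
    have "(\<Sum>j<n. - (\<Sum>k<n. Q j k) / 2 * cond_complement M (x ! j) y)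
        = (\<Sum>j<n. - y / 2 * (\<Sum>k<n. Q j k) - D / 2 * ((\<Sum>k<n. Q j k) * B (x ! j)))"
      by (intro sum.cong refl) (simp add: cc algebra_simps)
    then show ?thesis
      unfolding sum_subtractf sum_distrib_left[symmetric] S_def P_def .
  qed
  have pairs: "(\<Sum>j<n. \<Sum>k\<in>{Suc j..<n}. Q j k / 2 * cond_complement M (x ! j \<noteq> x ! k) y)
      = y / 2 * U + D / 2 * V"
  proof -
    have "(\<Sum>j<n. \<Sum>k\<in>{Suc j..<n}. Q j k / 2 * cond_complement M (x ! j \<noteq> x ! k) y)
        = (\<Sum>j<n. \<Sum>k\<in>{Suc j..<n}. y / 2 * Q j k + D / 2 * (Q j k * B (x ! j \<noteq> x ! k)))"
      by (intro sum.cong refl) (simp add: cc algebra_simps)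
    then show ?thesis
      unfolding sum.distrib sum_distrib_left[symmetric] U_def V_def .
  qed
  have "2 * U = S - (\<Sum>j<n. Q j j)"
    unfolding U_def S_def by (rule sum_upper_triangle_symmetric) (rule sym)
  then have S: "S = 2 * U + (\<Sum>j<n. Q j j)"
    by simp
  have "V = P - quad_form n Q x"
    unfolding V_def P_def B_def by (rule sum_upper_triangle_xor[OF sym])
  then have P: "P = V + quad_form n Q x"
    by simp
  show ?thesis
    unfolding singles pairs S_def[symmetric] S P by (simp add: D_def field_simps)
qed

lemma quad_form_take: "quad_form n Q (take n x) = quad_form n Q x"
  unfolding quad_form_def by (intro sum.cong) auto

lemma Utilde_eq_diag_phase:
  assumes "\<And>j k. j < n \<Longrightarrow> k < n \<Longrightarrow> Q j k = Q k j"
    and f: "\<And>x. length x = n \<Longrightarrow> real_of_int (f x) = c + quad_form n Q x"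
  shows "Utilde n d Q c = lin_op (n + d) (diag_mat (\<lambda>b. cis
    (2 * pi / 2 ^ d * real_of_int (f (take n b)) * bval (drop n b)
      + pi * (1 - 2 ^ d) / 2 ^ d * (real_of_int (f (take n b)) - c))))"
  (is "_ = ?rhs")
proof -
  have angle: "2 * pi / 2 ^ d * ((c + A) * Y - (2 ^ d - 1) / 2 * A)
      = 2 * pi / 2 ^ d * (c + A) * Y + pi * (1 - 2 ^ d) / 2 ^ d * A" for A Y :: real
    by (simp add: field_simps)
  have "Utilde n d Q c = lin_op (n + d) (diag_mat (\<lambda>b. cis (2 * pi / 2 ^ d *
      ((c + quad_form n Q (take n b)) * bval (drop n b) - (2 ^ d - 1) / 2 * quad_form n Q (take n b)))))"
    unfolding Utilde_eq_diag
    by (subst quadratic_phase_angle) (auto intro: assms(1) simp: quad_form_take)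
  also have "\<dots> = ?rhs"
    unfolding angle by (rule lin_op_diag_mat_cong) (simp add: f)
  finally show ?thesis .
qed

section \<open>Conjugation by the quantum Fourier transform\<close>

lemma cis_2pi_div_mod_eq:
  fixes a b m :: int
  assumes "a mod m = b mod m"
  shows "cis (2 * pi * a / m) = cis (2 * pi * b / m)"
proof (cases "m = 0")
  case True
  with assms show ?thesis by simp
next
  case False
  from assms obtain l where l: "a = b + m * l"
    by (metis mod_eq_dvd_iff dvd_def diff_eq_eq add.commute)
  have "2 * pi * a / m = 2 * pi * b / m + 2 * pi * l"
    using False by (simp add: l field_simps)
  then show ?thesis
    by (simp add: cis_mult[symmetric])
qed

lemma sum_cis_roots_of_unity:
  fixes m :: int
  assumes "N > 0"
  shows "(\<Sum>z::nat<N. cis (2 * pi * z * m / N)) = (if int N dvd m then of_nat N else 0)"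
proof -
  define \<omega> where "\<omega> = cis (2 * pi * m / N)"
  have powers: "cis (2 * pi * z * m / N) = \<omega> ^ z" for z :: nat
    by (simp add: \<omega>_def DeMoivre mult_ac)
  show ?thesis
  proof (cases "int N dvd m")
    case True
    then obtain l where "m = int N * l" ..
    then have "2 * pi * m / N = 2 * pi * l"
      using assms by simp
    then have "\<omega> = 1"
      by (simp add: \<omega>_def)
    then show ?thesis
      using True by (simp add: powers)
  next
    case False
    have "\<omega> \<noteq> 1"
    proof
      assume "\<omega> = 1"
      then have "cos (2 * pi * m / N) = 1"
        by (metis \<omega>_def cis.sel(1) one_complex.sel(1))
      then obtain l :: int where "2 * pi * m / N = of_int l * 2 * pi"
        using cos_one_2pi_int by blast
      then have "real_of_int m = real N * l"
        using assms by (simp add: field_simps)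
      then have "m = int N * l"
        by (metis of_int_eq_iff of_int_mult of_int_of_nat_eq)
      with False show False by simp
    qed
    moreover have "\<omega> ^ N = 1"
      using assms by (simp add: \<omega>_def DeMoivre)
    ultimately show ?thesis
      using False by (simp add: powers geometric_sum)
  qed
qed

lemma sum_lists_append_prefix:
  fixes g :: "bool list \<Rightarrow> 'a :: comm_monoid_add"
  assumes "length x = n"
    and "\<And>b. length b = n + d \<Longrightarrow> take n b \<noteq> x \<Longrightarrow> g b = 0"
  shows "(\<Sum>b\<in>{bs. length bs = n + d}. g b) = (\<Sum>v\<in>{vs. length vs = d}. g (x @ v))"
proof -
  have "(\<Sum>v\<in>{vs. length vs = d}. g (x @ v)) = (\<Sum>b\<in>(@) x ` {vs. length vs = d}. g b)"
    by (simp add: sum.reindex inj_on_def)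
  also have "\<dots> = (\<Sum>b\<in>{bs. length bs = n + d}. g b)"
  proof (rule sum.mono_neutral_left)
    show "(@) x ` {vs. length vs = d} \<subseteq> {bs. length bs = n + d}"
      using assms(1) by auto
    show "\<forall>b\<in>{bs. length bs = n + d} - (@) x ` {vs. length vs = d}. g b = 0"
      using assms by (metis (mono_tags, lifting) Diff_iff append_take_drop_id image_eqI length_drop
          add_diff_cancel_left' mem_Collect_eq)
  qed (rule finite_lists_length)
  finally show ?thesis ..
qed

lemma sum_lists_cis_bval:
  fixes m :: int
  shows "(\<Sum>v\<in>{vs. length vs = d}. cis (2 * pi * bval v * m / 2 ^ d))
    = (if 2 ^ d dvd m then 2 ^ d else 0)"
  using sum.reindex_bij_betw[OF bij_betw_bval, of "\<lambda>z. cis (2 * pi * z * m / 2 ^ d)" d]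
    sum_cis_roots_of_unity[of "2 ^ d" m]
  by simp

lemma QFT_amplitude_square: "complex_of_real (2 powr (- real d / 2)) ^ 2 * 2 ^ d = 1"
proof -
  have "(2 powr (- real d / 2)) ^ 2 = inverse ((2 :: real) powr real d)"
    by (subst powr_power) (simp_all add: powr_minus)
  then have "(2 powr (- real d / 2)) ^ 2 * 2 ^ d = (1 :: real)"
    by (simp add: powr_realpow)
  then show ?thesis
    by (metis of_real_1 of_real_mult of_real_numeral of_real_power)
qed

lemma QFT_mat_inner_same_prefix:
  assumes "length b = n + d" "length b0 = n + d" "take n b = take n b0"
  shows "(\<Sum>b'\<in>{bs. length bs = n + d}. cnj (QFT_mat n d b' b) * QFT_mat n d b' b0)
    = (if bval (drop n b0) = bval (drop n b) then 1 else 0)"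
proof -
  define x where "x = take n b0"
  define Y where "Y = int (bval (drop n b))"
  define Y0 where "Y0 = int (bval (drop n b0))"
  have x: "length x = n" "take n b = x" using assms by (auto simp: x_def)
  have "(\<Sum>b'\<in>{bs. length bs = n + d}. cnj (QFT_mat n d b' b) * QFT_mat n d b' b0)
      = (\<Sum>v\<in>{vs. length vs = d}.
          (2 powr (- real d / 2)) ^ 2 * cis (2 * pi * bval v * (Y0 - Y) / 2 ^ d))"
  proof (subst sum_lists_append_prefix[OF x(1)])
    show "cnj (QFT_mat n d b' b) * QFT_mat n d b' b0 = 0" if "take n b' \<noteq> x" for b'
      using that by (simp add: QFT_mat_def x_def)
    show "(\<Sum>v\<in>{vs. length vs = d}. cnj (QFT_mat n d (x @ v) b) * QFT_mat n d (x @ v) b0)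
        = (\<Sum>v\<in>{vs. length vs = d}.
            (2 powr (- real d / 2)) ^ 2 * cis (2 * pi * bval v * (Y0 - Y) / 2 ^ d))"
      using assms x
      by (intro sum.cong)
        (auto simp: QFT_mat_def cis_cnj cis_mult power2_eq_square Y_def Y0_def field_simps)
  qed
  also have "\<dots> = (if Y0 = Y then 1 else 0)"
  proof -
    have "0 \<le> Y" "Y < 2 ^ d" "0 \<le> Y0" "Y0 < 2 ^ d"
      using bval_less[of "drop n b"] bval_less[of "drop n b0"] assms
      by (auto simp: Y_def Y0_def of_nat_less_iff[symmetric])
    then have "2 ^ d dvd (Y0 - Y) \<longleftrightarrow> Y0 = Y"
      using dvd_imp_le_int[of "Y0 - Y" "2 ^ d"] by fastforce
    then show ?thesis
      using sum_lists_cis_bval[where d = d and m = "Y0 - Y"] QFT_amplitude_square[of d]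
      by (simp add: sum_distrib_left[symmetric])
  qed
  finally show ?thesis
    by (simp add: Y_def Y0_def)
qed

lemma QFT_mat_columns_orthonormal:
  assumes "length b0 = n + d"
  shows "(\<Sum>b'\<in>{bs. length bs = n + d}. cnj (QFT_mat n d b' b) * QFT_mat n d b' b0) = ket b0 b"
proof (cases "length b = n + d \<and> take n b = take n b0")
  case False
  have "(\<Sum>b'\<in>{bs. length bs = n + d}. cnj (QFT_mat n d b' b) * QFT_mat n d b' b0) = 0"
    by (rule sum.neutral) (use False in \<open>auto simp: QFT_mat_def\<close>)
  moreover have "ket b0 b = 0"
    using False assms by (auto simp: ket_def)
  ultimately show ?thesis by simp
next
  case True
  then have "bval (drop n b0) = bval (drop n b) \<longleftrightarrow> b0 = b"
    using assms inj_onD[OF bij_betw_imp_inj_on[OF bij_betw_bval[of d]]]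
    by (metis (mono_tags) append_take_drop_id length_drop mem_Collect_eq add_diff_cancel_left')
  with True assms show ?thesis
    by (simp add: QFT_mat_inner_same_prefix ket_def eq_commute[of b])
qed

lemma cis_bval_bits_d:
  fixes t :: nat
  shows "cis (2 * pi * bval (bits_d d y) * t / 2 ^ d) = cis (2 * pi * y * t / 2 ^ d)"
proof -
  have "(int (bval (bits_d d y)) * int t) mod 2 ^ d = (y * int t) mod 2 ^ d"
    by (simp add: bval_bits_d mod_mult_left_eq)
  from cis_2pi_div_mod_eq[OF this] show ?thesis by (simp add: mult.assoc)
qed

lemma QFT_ket_xy:
  assumes "length x = n"
  shows "QFT n d (ket_xy d x y) = (\<lambda>b. if length b = n + d \<and> take n b = x
    then complex_of_real (2 powr (- real d / 2)) * cis (2 * pi * y * bval (drop n b) / 2 ^ d)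
    else 0)"
  using assms by (auto simp: QFT_def ket_xy_def lin_op_ket QFT_mat_def cis_bval_bits_d fun_eq_iff)

lemma QFT_dag_QFT_ket:
  assumes "length b0 = n + d"
  shows "QFT_dag n d (QFT n d (ket b0)) = ket b0"
  unfolding QFT_def lin_op_ket[OF assms]
  by (simp add: QFT_dag_def lin_op_def adj_def fun_eq_iff QFT_mat_columns_orthonormal[OF assms])

lemma QFT_dag_diag_mat_QFT_ket_xy:
  fixes F :: int
  assumes x: "length x = n"
    and \<phi>: "\<And>b. length b = n + d \<Longrightarrow> take n b = x \<Longrightarrow>
      \<phi> b = cis (2 * pi / 2 ^ d * F * bval (drop n b) + \<alpha>)"
  shows "QFT_dag n d (lin_op (n + d) (diag_mat \<phi>) (QFT n d (ket_xy d x y)))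
    = (\<lambda>b. cis \<alpha> * ket_xy d x (y + F) b)"
proof -
  have "lin_op (n + d) (diag_mat \<phi>) (QFT n d (ket_xy d x y))
      = (\<lambda>b. cis \<alpha> * QFT n d (ket_xy d x (y + F)) b)"
  proof
    fix b :: "bool list"
    have "cis (2 * pi / 2 ^ d * F * Y + \<alpha>) * cis (2 * pi * y * Y / 2 ^ d)
        = cis \<alpha> * cis (2 * pi * (y + F) * Y / 2 ^ d)" for Y :: real
      by (simp add: cis_mult algebra_simps add_divide_distrib)
    then show "lin_op (n + d) (diag_mat \<phi>) (QFT n d (ket_xy d x y)) b
        = cis \<alpha> * QFT n d (ket_xy d x (y + F)) b"
      using \<phi> by (simp add: lin_op_diag_mat QFT_ket_xy[OF x] mult.left_commute)
  qed
  then have "QFT_dag n d (lin_op (n + d) (diag_mat \<phi>) (QFT n d (ket_xy d x y)))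
      = (\<lambda>b. cis \<alpha> * QFT_dag n d (QFT n d (ket_xy d x (y + F))) b)"
    by (simp add: QFT_dag_def lin_op_scale)
  also have "QFT_dag n d (QFT n d (ket_xy d x (y + F))) = ket_xy d x (y + F)"
    using x by (simp add: ket_xy_def QFT_dag_QFT_ket)
  finally show ?thesis .
qed

theorem mainTheorem1:
  fixes n d :: nat and Q :: "nat \<Rightarrow> nat \<Rightarrow> real" and c :: real
    and f :: "bool list \<Rightarrow> int"
  assumes "n \<ge> 1" and "d \<ge> 1"
    and sym: "\<forall>j<n. \<forall>k<n. Q j k = Q k j"
    and f_def: "\<forall>x. length x = n \<longrightarrow>
        real_of_int (f x) = c + (\<Sum>j<n. \<Sum>k<n. Q j k * (if x ! j then 1 else 0) * (if x ! k then 1 else 0))"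
    and f_range: "\<forall>x. length x = n \<longrightarrow> - (2 ^ (d - 1)) \<le> f x \<and> f x < 2 ^ (d - 1)"
  shows "(\<forall>x y. length x = n \<longrightarrow> 0 \<le> y \<longrightarrow> y < 2 ^ d \<longrightarrow>
            Utilde n d Q (real_of_int (f (replicate n False))) (ket_xy d x y)
            = (\<lambda>b. cis (2 * pi / 2 ^ d * real_of_int (f x) * real_of_int y
                     + pi * (1 - 2 ^ d) / 2 ^ d * real_of_int (f x - f (replicate n False)))
                   * ket_xy d x y b))
       \<and> (\<forall>x y. length x = n \<longrightarrow>
            U_f n d Q (real_of_int (f (replicate n False))) (ket_xy d x y)
            = (\<lambda>b. cis (pi * (1 - 2 ^ d) / 2 ^ d * real_of_int (f x - f (replicate n False)))
                   * ket_xy d x (y + f x) b))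
       \<and> proj_encoder n d f (U_f n d Q (real_of_int (f (replicate n False))))"
proof -
  have f_quad: "real_of_int (f x) = c + quad_form n Q x" if "length x = n" for x
    using f_def that by (simp add: quad_form_def)
  have f0: "real_of_int (f (replicate n False)) = c"
    using f_quad[of "replicate n False"] by (simp add: quad_form_def)
  define \<alpha> where "\<alpha> x = pi * (1 - 2 ^ d) / 2 ^ d * real_of_int (f x - f (replicate n False))" for x
  have Utilde: "Utilde n d Q (real_of_int (f (replicate n False))) = lin_op (n + d) (diag_mat
      (\<lambda>b. cis (2 * pi / 2 ^ d * real_of_int (f (take n b)) * bval (drop n b) + \<alpha> (take n b))))"
    unfolding \<alpha>_def of_int_diff f0 by (rule Utilde_eq_diag_phase) (use sym f_quad in auto)
  have encoder: "U_f n d Q (real_of_int (f (replicate n False))) (ket_xy d x y)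
      = (\<lambda>b. cis (\<alpha> x) * ket_xy d x (y + f x) b)" if "length x = n" for x y
    unfolding U_f_def comp_def Utilde
    by (rule QFT_dag_diag_mat_QFT_ket_xy) (simp_all add: that)
  show ?thesis
  proof (intro conjI allI impI)
    fix x :: "bool list" and y :: int
    assume "length x = n" "0 \<le> y" "y < 2 ^ d"
    then have "real (bval (bits_d d y)) = real_of_int y"
      by (metis bval_bits_d mod_pos_pos_trivial of_int_of_nat_eq)
    with \<open>length x = n\<close> show "Utilde n d Q (real_of_int (f (replicate n False))) (ket_xy d x y)
        = (\<lambda>b. cis (2 * pi / 2 ^ d * real_of_int (f x) * real_of_int y
            + pi * (1 - 2 ^ d) / 2 ^ d * real_of_int (f x - f (replicate n False))) * ket_xy d x y b)"
      by (simp add: Utilde ket_xy_def lin_op_diag_mat_ket \<alpha>_def)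
  qed (use encoder in \<open>auto simp: \<alpha>_def proj_encoder_def\<close>)
qed

end
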